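(* Let $X$ be a graph and $\{a,b\},\{\alpha,\beta\}\in E(X)$. If the line graph $\mathcal{L}(X)$, with adjacency Hamiltonian, admits perfect state transfer from the vertex $ab$ to the vertex $\alpha\beta$ at time $\tau$, then $X$, with signless Laplacian Hamiltonian $Q$, admits perfect state transfer from $\mathbf e_a+\mathbf e_b$ to $\mathbf e_\alpha+\mathbf e_\beta$ at time $\tau$.
   Context: The line graph $\mathcal L(X)$ has vertex set $E(X)$, two edges being adjacent iff they share an endpoint in $X$; the vertex corresponding to edge $\{a,b\}$ is written $ab$ and its vertex state $\mathbf f_{ab}$. $Q=D+A$ is the signless Laplacian of $X$. Perfect state transfer from $\mathbf u$ to $\boldsymbol\mu$ at time $\tau$ with Hamiltonian $M$ means $e^{-\mathrm{i}\tau M}\mathbf u=\eta\boldsymbol\mu$ with $|\eta|=1$. *)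

theory Defs
  imports "HOL-Analysis.Analysis"
begin

text \<open>Matrices over a finite index set S are functions S => S => complex; vectors are S => complex
 (only values on S matter).\<close>

definition simple_graph :: "'v set \<Rightarrow> 'v set set \<Rightarrow> bool" where
  "simple_graph V E \<longleftrightarrow> finite V \<and> (\<forall>e\<in>E. e \<subseteq> V \<and> card e = 2)"

definition mat_apply :: "'i set \<Rightarrow> ('i \<Rightarrow> 'i \<Rightarrow> complex) \<Rightarrow> ('i \<Rightarrow> complex) \<Rightarrow> ('i \<Rightarrow> complex)" where
  "mat_apply S M v = (\<lambda>x. \<Sum>y\<in>S. M x y * v y)"

definition evolve :: "'i set \<Rightarrow> ('i \<Rightarrow> 'i \<Rightarrow> complex) \<Rightarrow> real \<Rightarrow> ('i \<Rightarrow> complex) \<Rightarrow> ('i \<Rightarrow> complex)" where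
  "evolve S M t v = (\<lambda>x. \<Sum>k. ((- \<i> * complex_of_real t) ^ k / fact k) * ((mat_apply S M ^^ k) v) x)"

definition pst :: "'i set \<Rightarrow> ('i \<Rightarrow> 'i \<Rightarrow> complex) \<Rightarrow> ('i \<Rightarrow> complex) \<Rightarrow> ('i \<Rightarrow> complex) \<Rightarrow> real \<Rightarrow> bool" where
  "pst S M u mu t \<longleftrightarrow> (\<exists>\<eta>. cmod \<eta> = 1 \<and> (\<forall>x\<in>S. evolve S M t u x = \<eta> * mu x))"

definition degree :: "'v set set \<Rightarrow> 'v \<Rightarrow> nat" where
  "degree E x = card {e\<in>E. x \<in> e}"

definition signless_laplacian :: "'v set set \<Rightarrow> 'v \<Rightarrow> 'v \<Rightarrow> complex" where
  "signless_laplacian E x y =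
     (if x = y then of_nat (degree E x) else if {x, y} \<in> E then 1 else 0)"

definition line_graph_adj :: "'v set set \<Rightarrow> 'v set \<Rightarrow> 'v set \<Rightarrow> complex" where
  "line_graph_adj E e f = (if e \<noteq> f \<and> e \<inter> f \<noteq> {} then 1 else 0)"

definition std_vec :: "'i \<Rightarrow> 'i \<Rightarrow> complex" where
  "std_vec a = (\<lambda>x. if x = a then 1 else 0)"

end

theory Submission
  imports Defs
begin

text \<open>Let N be the V \<times> E incidence matrix of X and A the adjacency matrix of the line graph.
  Then N^T N = A + 2I and N N^T = Q, hence N (A + 2I) = Q N and therefore
  N exp(-i\<tau>(A + 2I)) = exp(-i\<tau>Q) N. Since 2I commutes with A, exp(-i\<tau>(A + 2I)) = exp(-2i\<tau>) exp(-i\<tau>A).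
  Applying N to exp(-i\<tau>A) e_ab = \<eta> e_\<alpha>\<beta> and using N e_ab = e_a + e_b gives
  exp(-i\<tau>Q) (e_a + e_b) = exp(-2i\<tau>) \<eta> (e_\<alpha> + e_\<beta>).
  The exponential series are handled entrywise; an l1 bound makes them absolutely convergent, which
  justifies exchanging them with finite sums and forming the Cauchy product with exp(-i\<tau>c).\<close>

definition l1_norm :: "'i set \<Rightarrow> ('i \<Rightarrow> complex) \<Rightarrow> real" where
  "l1_norm S w = (\<Sum>y\<in>S. cmod (w y))"

definition entrywise_l1_norm :: "'i set \<Rightarrow> ('i \<Rightarrow> 'i \<Rightarrow> complex) \<Rightarrow> real" where
  "entrywise_l1_norm S M = (\<Sum>x\<in>S. \<Sum>y\<in>S. cmod (M x y))"

lemma norm_le_l1_norm: "finite S \<Longrightarrow> x \<in> S \<Longrightarrow> cmod (w x) \<le> l1_norm S w"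
  unfolding l1_norm_def by (rule member_le_sum) auto

lemma l1_norm_mat_apply_le:
  assumes "finite S"
  shows "l1_norm S (mat_apply S M w) \<le> entrywise_l1_norm S M * l1_norm S w"
proof -
  have "l1_norm S (mat_apply S M w) \<le> (\<Sum>x\<in>S. \<Sum>y\<in>S. cmod (M x y) * cmod (w y))"
    unfolding l1_norm_def mat_apply_def
    by (intro sum_mono order_trans[OF norm_sum]) (simp add: norm_mult)
  also have "\<dots> \<le> (\<Sum>x\<in>S. \<Sum>y\<in>S. cmod (M x y) * l1_norm S w)"
    by (intro sum_mono mult_left_mono norm_le_l1_norm assms) auto
  also have "\<dots> = entrywise_l1_norm S M * l1_norm S w"
    unfolding entrywise_l1_norm_def by (simp add: sum_distrib_right)
  finally show ?thesis .
qed

lemma l1_norm_mat_apply_power_le: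
  assumes "finite S"
  shows "l1_norm S ((mat_apply S M ^^ k) w) \<le> entrywise_l1_norm S M ^ k * l1_norm S w"
proof (induction k)
  case 0
  then show ?case by simp
next
  case (Suc k)
  have "l1_norm S ((mat_apply S M ^^ Suc k) w)
      \<le> entrywise_l1_norm S M * l1_norm S ((mat_apply S M ^^ k) w)"
    using l1_norm_mat_apply_le[OF assms] by simp
  also have "\<dots> \<le> entrywise_l1_norm S M * (entrywise_l1_norm S M ^ k * l1_norm S w)"
    by (intro mult_left_mono Suc.IH) (simp add: entrywise_l1_norm_def sum_nonneg)
  finally show ?case
    by (simp add: mult.assoc)
qed

lemma evolve_series_summable:
  assumes "finite S" "x \<in> S"
  shows "summable (\<lambda>k. norm (z ^ k / fact k * (mat_apply S M ^^ k) w x))"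
proof (rule summable_comparison_test)
  let ?K = "entrywise_l1_norm S M"
  show "summable (\<lambda>k. l1_norm S w * (inverse (fact k) * (cmod z * ?K) ^ k))"
    by (intro summable_mult summable_exp)
  have "norm (z ^ k / fact k * (mat_apply S M ^^ k) w x)
      \<le> l1_norm S w * (inverse (fact k) * (cmod z * ?K) ^ k)" for k
  proof -
    have "cmod ((mat_apply S M ^^ k) w x) \<le> ?K ^ k * l1_norm S w"
      using norm_le_l1_norm[OF assms] l1_norm_mat_apply_power_le[OF assms(1)] order_trans by blast
    then have "cmod z ^ k / fact k * cmod ((mat_apply S M ^^ k) w x)
        \<le> cmod z ^ k / fact k * (?K ^ k * l1_norm S w)"
      by (intro mult_left_mono) auto
    then show ?thesis
      by (simp add: norm_mult norm_divide norm_power field_simps)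
  qed
  then show "\<exists>N. \<forall>k\<ge>N. norm (norm (z ^ k / fact k * (mat_apply S M ^^ k) w x))
      \<le> l1_norm S w * (inverse (fact k) * (cmod z * ?K) ^ k)"
    by simp
qed

definition mat_vec_mult :: "'j set \<Rightarrow> ('i \<Rightarrow> 'j \<Rightarrow> complex) \<Rightarrow> ('j \<Rightarrow> complex) \<Rightarrow> 'i \<Rightarrow> complex" where
  "mat_vec_mult S B w = (\<lambda>x. \<Sum>y\<in>S. B x y * w y)"

lemma mat_vec_mult_cong:
  "(\<And>y. y \<in> S \<Longrightarrow> v y = w y) \<Longrightarrow> mat_vec_mult S B v = mat_vec_mult S B w"
  unfolding mat_vec_mult_def by simp

lemma mat_vec_mult_scale:
  "mat_vec_mult S B (\<lambda>y. c * w y) = (\<lambda>x. c * mat_vec_mult S B w x)"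
  unfolding mat_vec_mult_def by (simp add: sum_distrib_left mult_ac)

lemma evolve_intertwine:
  assumes "finite S"
    and intertwine: "\<And>w. mat_vec_mult S B (mat_apply S M w) = mat_apply S' M' (mat_vec_mult S B w)"
  shows "mat_vec_mult S B (evolve S M t w) = evolve S' M' t (mat_vec_mult S B w)"
proof
  fix x
  define c :: "nat \<Rightarrow> complex" where "c k = (- \<i> * complex_of_real t) ^ k / fact k" for k
  have powers: "mat_vec_mult S B ((mat_apply S M ^^ k) w) = (mat_apply S' M' ^^ k) (mat_vec_mult S B w)"
    for k by (induction k) (simp_all add: intertwine)
  have summable: "summable (\<lambda>k. c k * (mat_apply S M ^^ k) w y)" if "y \<in> S" for y
    unfolding c_def by (rule summable_norm_cancel[OF evolve_series_summable[OF assms(1) that]])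
  have "mat_vec_mult S B (evolve S M t w) x = (\<Sum>y\<in>S. \<Sum>k. B x y * (c k * (mat_apply S M ^^ k) w y))"
    unfolding mat_vec_mult_def evolve_def c_def[symmetric]
    by (intro sum.cong refl suminf_mult[symmetric] summable)
  also have "\<dots> = (\<Sum>k. \<Sum>y\<in>S. B x y * (c k * (mat_apply S M ^^ k) w y))"
    by (intro suminf_sum[symmetric] summable_mult summable)
  also have "\<dots> = (\<Sum>k. c k * mat_vec_mult S B ((mat_apply S M ^^ k) w) x)"
    by (simp add: mat_vec_mult_def sum_distrib_left mult_ac)
  also have "\<dots> = evolve S' M' t (mat_vec_mult S B w) x"
    by (simp add: powers evolve_def c_def)
  finally show "mat_vec_mult S B (evolve S M t w) x = evolve S' M' t (mat_vec_mult S B w) x" .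
qed

lemma binomial_sum_Suc:
  fixes c :: "'a::comm_semiring_1" and u :: "nat \<Rightarrow> 'a"
  shows "(\<Sum>j\<le>k. of_nat (k choose j) * c ^ (k - j) * u (Suc j))
           + c * (\<Sum>j\<le>k. of_nat (k choose j) * c ^ (k - j) * u j)
         = (\<Sum>j\<le>Suc k. of_nat (Suc k choose j) * c ^ (Suc k - j) * u j)"
proof -
  have "(\<Sum>j\<le>Suc k. of_nat (Suc k choose j) * c ^ (Suc k - j) * u j)
      = c ^ Suc k * u 0 + (\<Sum>j\<le>k. of_nat (k choose j) * c ^ (k - j) * u (Suc j))
          + (\<Sum>j\<le>k. of_nat (k choose Suc j) * c ^ (k - j) * u (Suc j))"
  proof -
    have "(\<Sum>j\<le>Suc k. of_nat (Suc k choose j) * c ^ (Suc k - j) * u j)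
        = c ^ Suc k * u 0 + (\<Sum>j\<le>k. of_nat (Suc k choose Suc j) * c ^ (k - j) * u (Suc j))"
      by (subst sum.atMost_Suc_shift) simp
    then show ?thesis
      by (simp add: sum.distrib[symmetric] distrib_right add.assoc)
  qed
  moreover have "c * (\<Sum>j\<le>k. of_nat (k choose j) * c ^ (k - j) * u j)
      = c ^ Suc k * u 0 + (\<Sum>j\<le>k. of_nat (k choose Suc j) * c ^ (k - j) * u (Suc j))"
  proof -
    have "c * (\<Sum>j\<le>k. of_nat (k choose j) * c ^ (k - j) * u j)
        = (\<Sum>j\<le>Suc k. of_nat (k choose j) * c ^ (Suc k - j) * u j)"
      by (simp add: sum_distrib_left Suc_diff_le binomial_eq_0 mult.assoc mult.left_commute)
    also have "\<dots> = c ^ Suc k * u 0 + (\<Sum>j\<le>k. of_nat (k choose Suc j) * c ^ (k - j) * u (Suc j))"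
      by (subst sum.atMost_Suc_shift) simp
    finally show ?thesis .
  qed
  ultimately show ?thesis by (simp add: ac_simps)
qed

lemma mat_apply_cong:
  "(\<And>y. y \<in> S \<Longrightarrow> v y = w y) \<Longrightarrow> mat_apply S M v = mat_apply S M w"
  unfolding mat_apply_def by simp

lemma mat_apply_sum:
  "mat_apply S M (\<lambda>y. \<Sum>j\<in>J. f j * g j y) x = (\<Sum>j\<in>J. f j * mat_apply S M (g j) x)"
  unfolding mat_apply_def
  by (simp add: sum_distrib_left sum_distrib_right mult_ac sum.swap[of _ S])

definition add_diagonal :: "('i \<Rightarrow> 'i \<Rightarrow> complex) \<Rightarrow> complex \<Rightarrow> 'i \<Rightarrow> 'i \<Rightarrow> complex" where
  "add_diagonal M c = (\<lambda>p q. M p q + (if p = q then c else 0))"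

lemma mat_apply_add_diagonal:
  assumes "finite S" "x \<in> S"
  shows "mat_apply S (add_diagonal M c) w x = mat_apply S M w x + c * w x"
proof -
  have "mat_apply S (add_diagonal M c) w x
     = (\<Sum>y\<in>S. M x y * w y + (if x = y then c * w y else 0))"
    unfolding mat_apply_def add_diagonal_def by (intro sum.cong refl) (simp add: distrib_right)
  then show ?thesis
    unfolding mat_apply_def sum.distrib using assms by simp
qed

lemma mat_apply_add_diagonal_power:
  assumes "finite S" "x \<in> S"
  shows "(mat_apply S (add_diagonal M c) ^^ k) w x
     = (\<Sum>j\<le>k. of_nat (k choose j) * c ^ (k - j) * (mat_apply S M ^^ j) w x)"
  using assms(2)
proof (induction k arbitrary: x)
  case 0
  then show ?case by simp
next
  case (Suc k)
  let ?T = "mat_apply S M"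
  let ?T' = "mat_apply S (add_diagonal M c)"
  let ?B = "\<lambda>y. \<Sum>j\<le>k. of_nat (k choose j) * c ^ (k - j) * (?T ^^ j) w y"
  have "(?T' ^^ Suc k) w x = ?T' ?B x"
    using mat_apply_cong[of S "(?T' ^^ k) w" ?B] Suc.IH by simp
  also have "\<dots> = ?T ?B x + c * ?B x"
    by (rule mat_apply_add_diagonal[OF assms(1) Suc.prems])
  also have "?T ?B x = (\<Sum>j\<le>k. of_nat (k choose j) * c ^ (k - j) * (?T ^^ Suc j) w x)"
    using mat_apply_sum[of S M "\<lambda>j. of_nat (k choose j) * c ^ (k - j)" "\<lambda>j. (?T ^^ j) w" "{..k}" x]
    by (simp add: mult.assoc)
  finally show ?case
    using binomial_sum_Suc[of k c "\<lambda>j. (?T ^^ j) w x"] by simp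
qed

lemma evolve_add_diagonal:
  assumes "finite S" "x \<in> S"
  shows "evolve S (add_diagonal M c) t w x
     = exp (- \<i> * complex_of_real t * c) * evolve S M t w x"
proof -
  define z where "z = - \<i> * complex_of_real t"
  define a where "a j = z ^ j / fact j * (mat_apply S M ^^ j) w x" for j
  define b where "b l = (z * c) ^ l / fact l" for l
  have a_summable: "summable (\<lambda>k. norm (a k))"
    unfolding a_def by (rule evolve_series_summable[OF assms])
  have b_summable: "summable (\<lambda>k. norm (b k))"
    using summable_exp[of "cmod (z * c)"]
    by (simp add: b_def norm_mult norm_inverse norm_divide norm_power divide_inverse mult.commute)
  have b_sum: "(\<Sum>k. b k) = exp (z * c)"
    using exp_converges[of "z * c"]
    by (simp add: b_def sums_iff scaleR_conv_of_real divide_inverse mult.commute)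
  have convolution: "z ^ k / fact k * (\<Sum>j\<le>k. of_nat (k choose j) * c ^ (k - j) * (mat_apply S M ^^ j) w x)
      = (\<Sum>j\<le>k. a j * b (k - j))" for k
    unfolding sum_distrib_left
  proof (intro sum.cong refl)
    fix j assume "j \<in> {..k}"
    then have "j \<le> k" by simp
    then have "z ^ k = z ^ j * z ^ (k - j)" by (simp flip: power_add)
    with \<open>j \<le> k\<close> show "z ^ k / fact k * (of_nat (k choose j) * c ^ (k - j) * (mat_apply S M ^^ j) w x)
        = a j * b (k - j)"
      by (simp add: a_def b_def binomial_fact field_simps)
  qed
  have "evolve S (add_diagonal M c) t w x = (\<Sum>k. \<Sum>j\<le>k. a j * b (k - j))"
    unfolding evolve_def z_def[symmetric] mat_apply_add_diagonal_power[OF assms] convolution ..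
  also have "\<dots> = (\<Sum>k. a k) * (\<Sum>k. b k)"
    by (rule Cauchy_product[OF a_summable b_summable, symmetric])
  also have "(\<Sum>k. a k) = evolve S M t w x"
    by (simp add: a_def evolve_def z_def)
  finally show ?thesis
    by (simp add: b_sum z_def mult.commute)
qed

definition incidence :: "'v \<Rightarrow> 'v set \<Rightarrow> complex" where
  "incidence x e = of_bool (x \<in> e)"

lemma simple_graph_finite_edges: "simple_graph V E \<Longrightarrow> finite E"
  unfolding simple_graph_def by (meson Pow_iff finite_Pow_iff finite_subset subsetI)

lemma card_Int_of_distinct_2_sets:
  assumes "card e = 2" "card f = 2" "e \<noteq> f"
  shows "card (e \<inter> f) = of_bool (e \<inter> f \<noteq> {})"
  using assms by (auto simp: card_2_iff doubleton_eq_iff Int_insert_left)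

lemma card_2_set_eq:
  assumes "card e = 2" "x \<in> e" "y \<in> e" "x \<noteq> y"
  shows "e = {x, y}"
  using assms by (auto simp: card_2_iff)

lemma incidence_gram_edges:
  assumes "simple_graph V E" "e \<in> E" "f \<in> E"
  shows "(\<Sum>y\<in>V. incidence y e * incidence y f) = add_diagonal (line_graph_adj E) 2 e f"
proof -
  have "finite V" "card e = 2" "card f = 2" "e \<inter> f \<subseteq> V"
    using assms unfolding simple_graph_def by auto
  moreover have "V \<inter> {y. y \<in> e \<and> y \<in> f} = e \<inter> f"
    using \<open>e \<inter> f \<subseteq> V\<close> by blast
  ultimately have "(\<Sum>y\<in>V. incidence y e * incidence y f) = of_nat (card (e \<inter> f))"
    by (simp add: incidence_def flip: of_bool_conj)
  with \<open>card e = 2\<close> \<open>card f = 2\<close> show ?thesis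
    by (cases "e = f") (simp_all add: add_diagonal_def line_graph_adj_def card_Int_of_distinct_2_sets)
qed

lemma incidence_gram_vertices:
  assumes "simple_graph V E"
  shows "(\<Sum>e\<in>E. incidence x e * incidence y e) = signless_laplacian E x y"
proof (cases "x = y")
  case True
  have "E \<inter> {e. x \<in> e} = {e \<in> E. x \<in> e}"
    by blast
  with True show ?thesis
    using simple_graph_finite_edges[OF assms]
    by (simp add: incidence_def signless_laplacian_def degree_def)
next
  case False
  have pair: "e = {x, y}" if "e \<in> E" "x \<in> e" "y \<in> e" for e
  proof -
    have "card e = 2"
      using assms \<open>e \<in> E\<close> by (simp add: simple_graph_def)
    then show ?thesis
      using that(2,3) False by (rule card_2_set_eq)
  qed
  then have "E \<inter> {e. x \<in> e \<and> y \<in> e} \<subseteq> {{x, y}}"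
    by blast
  then have "E \<inter> {e. x \<in> e \<and> y \<in> e} = (if {x, y} \<in> E then {{x, y}} else {})"
    by (auto dest: subset_singletonD)
  then show ?thesis
    using simple_graph_finite_edges[OF assms] \<open>x \<noteq> y\<close>
    by (simp add: incidence_def signless_laplacian_def flip: of_bool_conj)
qed

lemma incidence_intertwines_signless_laplacian:
  assumes "simple_graph V E"
  shows "mat_vec_mult E incidence (mat_apply E (add_diagonal (line_graph_adj E) 2) w)
       = mat_apply V (signless_laplacian E) (mat_vec_mult E incidence w)"
proof
  fix x
  have "mat_vec_mult E incidence (mat_apply E (add_diagonal (line_graph_adj E) 2) w) x
      = (\<Sum>e\<in>E. incidence x e * (\<Sum>f\<in>E. (\<Sum>y\<in>V. incidence y e * incidence y f) * w f))"
    unfolding mat_vec_mult_def mat_apply_def using incidence_gram_edges[OF assms] by simp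
  also have "\<dots> = (\<Sum>y\<in>V. (\<Sum>e\<in>E. incidence x e * incidence y e) * (\<Sum>f\<in>E. incidence y f * w f))"
  proof -
    have "(\<Sum>e\<in>E. incidence x e * (\<Sum>f\<in>E. (\<Sum>y\<in>V. incidence y e * incidence y f) * w f))
        = (\<Sum>e\<in>E. \<Sum>f\<in>E. \<Sum>y\<in>V. incidence x e * incidence y e * (incidence y f * w f))"
      by (simp add: sum_distrib_left sum_distrib_right mult_ac)
    also have "\<dots> = (\<Sum>e\<in>E. \<Sum>y\<in>V. \<Sum>f\<in>E. incidence x e * incidence y e * (incidence y f * w f))"
      by (intro sum.cong refl) (rule sum.swap)
    also have "\<dots> = (\<Sum>y\<in>V. \<Sum>e\<in>E. \<Sum>f\<in>E. incidence x e * incidence y e * (incidence y f * w f))"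
      by (rule sum.swap)
    also have "\<dots> = (\<Sum>y\<in>V. (\<Sum>e\<in>E. incidence x e * incidence y e) * (\<Sum>f\<in>E. incidence y f * w f))"
      by (simp only: sum_product mult.assoc)
    finally show ?thesis .
  qed
  also have "\<dots> = mat_apply V (signless_laplacian E) (mat_vec_mult E incidence w) x"
    unfolding mat_vec_mult_def mat_apply_def using incidence_gram_vertices[OF assms] by simp
  finally show "mat_vec_mult E incidence (mat_apply E (add_diagonal (line_graph_adj E) 2) w) x
      = mat_apply V (signless_laplacian E) (mat_vec_mult E incidence w) x" .
qed

lemma mat_vec_mult_incidence_std_vec:
  assumes "simple_graph V E" "{x, y} \<in> E"
  shows "mat_vec_mult E incidence (std_vec {x, y}) = (\<lambda>z. std_vec x z + std_vec y z)"
proof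
  fix z
  have "x \<noteq> y"
    using assms unfolding simple_graph_def by fastforce
  have "mat_vec_mult E incidence (std_vec {x, y}) z = incidence z {x, y}"
    using simple_graph_finite_edges[OF assms(1)] assms(2)
    by (simp add: mat_vec_mult_def std_vec_def if_distrib cong: if_cong)
  with \<open>x \<noteq> y\<close> show "mat_vec_mult E incidence (std_vec {x, y}) z = std_vec x z + std_vec y z"
    by (auto simp: incidence_def std_vec_def)
qed

theorem mainTheorem10:
  fixes V :: "'v set" and E :: "'v set set" and a b \<alpha> \<beta> :: 'v and \<tau> :: real
  assumes "simple_graph V E"
    and "{a, b} \<in> E" and "{\<alpha>, \<beta>} \<in> E"
    and "pst E (line_graph_adj E) (std_vec {a, b}) (std_vec {\<alpha>, \<beta>}) \<tau>"
  shows "pst V (signless_laplacian E) (\<lambda>x. std_vec a x + std_vec b x)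
           (\<lambda>x. std_vec \<alpha> x + std_vec \<beta> x) \<tau>"
proof -
  obtain \<eta> where "cmod \<eta> = 1"
    and transfer: "\<forall>e\<in>E. evolve E (line_graph_adj E) \<tau> (std_vec {a, b}) e = \<eta> * std_vec {\<alpha>, \<beta>} e"
    using assms(4) unfolding pst_def by blast
  define \<eta>' where "\<eta>' = exp (- \<i> * complex_of_real \<tau> * 2) * \<eta>"
  have "cmod \<eta>' = 1"
    using \<open>cmod \<eta> = 1\<close> by (simp add: \<eta>'_def norm_mult)
  have finite_edges: "finite E"
    using simple_graph_finite_edges[OF assms(1)] .
  have "evolve V (signless_laplacian E) \<tau> (\<lambda>x. std_vec a x + std_vec b x)
      = mat_vec_mult E incidence (evolve E (add_diagonal (line_graph_adj E) 2) \<tau> (std_vec {a, b}))"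
    unfolding mat_vec_mult_incidence_std_vec[OF assms(1,2), symmetric]
    by (rule evolve_intertwine[OF finite_edges incidence_intertwines_signless_laplacian[OF assms(1)], symmetric])
  also have "\<dots> = mat_vec_mult E incidence (\<lambda>e. \<eta>' * std_vec {\<alpha>, \<beta>} e)"
    using transfer by (intro mat_vec_mult_cong) (simp add: evolve_add_diagonal[OF finite_edges] \<eta>'_def)
  also have "\<dots> = (\<lambda>x. \<eta>' * (std_vec \<alpha> x + std_vec \<beta> x))"
    by (simp add: mat_vec_mult_scale mat_vec_mult_incidence_std_vec[OF assms(1,3)])
  finally show ?thesis
    using \<open>cmod \<eta>' = 1\<close> unfolding pst_def by auto
qed

end
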